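(* Consider an instance $(f,V,B)$ and run the main loop of Algorithm $\mathsf{LA}$ (described in the context). Let $X$ and $Y$ be the two sets at the end of the main loop, and let $O_1$ be an optimal solution of the problem restricted to $V_1$, i.e. $O_1\in\arg\max\{f(S): S\subseteq V_1,\ c(S)\le B\}$. Then $$f(O_1)\le 3\big(f(X)+f(Y)\big).$$
   Context: Setting: $V$ is a finite ground set of size $n$. $f:2^V\to\mathbb{R}_{\ge 0}$ is a non-negative submodular set function with $f(\emptyset)=0$. Submodular means $f(A\cup\{e\})-f(A)\ge f(B'\cup\{e\})-f(B')$ for all $A\subseteq B'\subseteq V$ and $e\in V\setminus B'$. Each $e\in V$ has a cost $c(e)>0$, and $c(S)=\sum_{e\in S}c(e)$. $B>0$ is a budget, and $c(e)\le B$ for every $e\in V$. The notation $f(e\mid S)=f(S\cup\{e\})-f(S)$ is used throughout. Algorithm $\mathsf{LA}$ on $(f,V,B)$ runs as follows. 1. Set $V_1=\{e\in V: c(e)\le B/2\}$ and $X=Y=\emptyset$. Let $e_{\max}\in\arg\max_{e\in V}f(e)$. 2. Main loop: process each $e\in V_1$ once, in an arbitrary fixed order. Among the sets $Z\in\{X,Y\}$ satisfying $f(e\mid Z)/c(e)\ge f(Z)/B$, choose one maximizing $f(e\mid Z)/c(e)$, breaking ties arbitrarily. If such a $Z$ exists, add $e$ to $Z$. 3. After the loop, for $T\in\{X,Y\}$ let $T(j)$ denote the set of the last $j$ elements added to $T$. Let $X'$ be the set $X(j)$ of largest cost among those with $0\le j\le|X|$ and $c(X(j))\le B$. Define $Y'$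 from $Y$ in the same way. 4. Return the set $S$ among $X'$, $Y'$ and $\{e_{\max}\}$ with the largest $f$ value. *)

theory Defs
  imports Complex_Main
begin

definition marg :: "('a set \<Rightarrow> real) \<Rightarrow> 'a \<Rightarrow> 'a set \<Rightarrow> real" where
  "marg f e S = f (S \<union> {e}) - f S"

definition submodular_on :: "'a set \<Rightarrow> ('a set \<Rightarrow> real) \<Rightarrow> bool" where
  "submodular_on V f \<longleftrightarrow>
     (\<forall>A B'. A \<subseteq> B' \<and> B' \<subseteq> V \<longrightarrow>
        (\<forall>e \<in> V - B'. f (A \<union> {e}) - f A \<ge> f (B' \<union> {e}) - f B'))"

definition cost :: "('a \<Rightarrow> real) \<Rightarrow> 'a set \<Rightarrow> real" where
  "cost c S = (\<Sum>e\<in>S. c e)"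

definition la_ok :: "('a set \<Rightarrow> real) \<Rightarrow> ('a \<Rightarrow> real) \<Rightarrow> real \<Rightarrow> 'a \<Rightarrow> 'a set \<Rightarrow> bool" where
  "la_ok f c B e Z \<longleftrightarrow> marg f e Z / c e \<ge> f Z / B"

text \<open>One iteration of the main loop processing element e, as a relation on states (X,Y);
  tie-breaking is arbitrary, so every admissible choice is allowed.\<close>
inductive la_step :: "('a set \<Rightarrow> real) \<Rightarrow> ('a \<Rightarrow> real) \<Rightarrow> real \<Rightarrow> 'a
    \<Rightarrow> 'a set \<times> 'a set \<Rightarrow> 'a set \<times> 'a set \<Rightarrow> bool" for f c B e where
  addX: "la_ok f c B e X \<Longrightarrow>
         (la_ok f c B e Y \<longrightarrow> marg f e X / c e \<ge> marg f e Y / c e) \<Longrightarrow>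
         la_step f c B e (X, Y) (insert e X, Y)"
| addY: "la_ok f c B e Y \<Longrightarrow>
         (la_ok f c B e X \<longrightarrow> marg f e Y / c e \<ge> marg f e X / c e) \<Longrightarrow>
         la_step f c B e (X, Y) (X, insert e Y)"
| skip: "\<not> la_ok f c B e X \<Longrightarrow> \<not> la_ok f c B e Y \<Longrightarrow>
         la_step f c B e (X, Y) (X, Y)"

inductive la_run :: "('a set \<Rightarrow> real) \<Rightarrow> ('a \<Rightarrow> real) \<Rightarrow> real \<Rightarrow> 'a list
    \<Rightarrow> 'a set \<times> 'a set \<Rightarrow> 'a set \<times> 'a set \<Rightarrow> bool" for f c B where
  Nil: "la_run f c B [] s s"
| Cons: "la_step f c B e s s' \<Longrightarrow> la_run f c B es s' s'' \<Longrightarrow> la_run f c B (e # es) s s''"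

end

theory Submission
  imports Defs
begin

text \<open>Let \<open>S = f X + f Y\<close>. When an element \<open>e \<in> O\<^sub>1\<close> is processed, either it is rejected
  by both sets, so its marginal gains are below \<open>c(e) f(\<cdot>)/B\<close>, or it is added to the set on which
  its density is largest, so its gain on the other set is bounded by the increment it causes.
  By submodularity these bounds survive until the end of the loop; summing over \<open>O\<^sub>1\<close>, the
  increments telescope to at most \<open>S\<close> and the cost terms add up to at most \<open>c(O\<^sub>1) S/B \<le> S\<close>,
  so \<open>\<Sum>\<^sub>e\<^sub>\<in>\<^sub>O\<^sub>1 f(e|X) + f(e|Y) \<le> 2S\<close>. Finally, as \<open>X\<close> and \<open>Y\<close> are disjoint,
  \<open>f(O\<^sub>1) \<le> f(X \<union> O\<^sub>1) + f(Y \<union> O\<^sub>1) \<le> S + \<Sum>\<^sub>e\<^sub>\<in>\<^sub>O\<^sub>1 f(e|X) + f(e|Y) \<le> 3S\<close>.\<close>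

lemma marg_of_mem: "e \<in> Z \<Longrightarrow> marg f e Z = 0"
  by (simp add: marg_def insert_absorb)

lemma marg_eq: "marg f e Z = f (insert e Z) - f Z"
  by (simp add: marg_def)

locale submodular_fn =
  fixes V :: "'a set" and f :: "'a set \<Rightarrow> real"
  assumes submodular: "submodular_on V f"
begin

lemma marg_antimono:
  assumes "A \<subseteq> C" "C \<subseteq> V" "e \<in> V - C"
  shows "marg f e C \<le> marg f e A"
  using submodular assms unfolding submodular_on_def marg_def by blast

lemma marg_le_max_zero:
  assumes "A \<subseteq> C" "C \<subseteq> V" "e \<in> V"
  shows "marg f e C \<le> max 0 (marg f e A)"
  using marg_antimono[OF assms(1,2)] marg_of_mem[of e C] assms(3) by fastforce

lemma union_increment_antimono:
  assumes "finite T" "T \<subseteq> V" "A \<subseteq> C" "C \<subseteq> V" "T \<inter> C = {}"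
  shows "f (C \<union> T) - f C \<le> f (A \<union> T) - f A"
  using assms
proof (induction T rule: finite_induct)
  case empty
  then show ?case by simp
next
  case (insert x T)
  have "marg f x (C \<union> T) \<le> marg f x (A \<union> T)"
    using insert by (intro marg_antimono) auto
  with insert show ?case by (simp add: marg_eq)
qed

lemma union_inter_le:
  assumes "finite C" "A \<subseteq> V" "C \<subseteq> V"
  shows "f (A \<union> C) + f (A \<inter> C) \<le> f A + f C"
proof -
  have "f (A \<union> (C - A)) - f A \<le> f ((A \<inter> C) \<union> (C - A)) - f (A \<inter> C)"
    using assms by (intro union_increment_antimono) auto
  moreover have "A \<union> (C - A) = A \<union> C" "(A \<inter> C) \<union> (C - A) = C" by auto
  ultimately show ?thesis by simp
qed

lemma union_le_add_sum_marg:
  assumes "finite T" "T \<subseteq> V" "A \<subseteq> V"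
  shows "f (A \<union> T) \<le> f A + (\<Sum>t\<in>T. marg f t A)"
  using assms
proof (induction T rule: finite_induct)
  case empty
  then show ?case by simp
next
  case (insert x T)
  show ?case
  proof (cases "x \<in> A")
    case True
    then have "A \<union> insert x T = A \<union> T" by auto
    with insert True show ?thesis by (simp add: marg_of_mem)
  next
    case False
    have "marg f x (A \<union> T) \<le> marg f x A"
      using insert False by (intro marg_antimono) auto
    with insert show ?thesis by (simp add: marg_eq)
  qed
qed

end

locale nonneg_submodular_fn = submodular_fn +
  assumes nonneg: "\<And>S. S \<subseteq> V \<Longrightarrow> 0 \<le> f S"
begin

lemma le_add_union_of_disjoint:
  assumes "finite T" "finite Y" "T \<subseteq> V" "X \<subseteq> V" "Y \<subseteq> V" "X \<inter> Y = {}"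
  shows "f T \<le> f (X \<union> T) + f (Y \<union> T)"
proof -
  have "f ((X \<union> T) \<union> (Y \<union> T)) + f ((X \<union> T) \<inter> (Y \<union> T)) \<le> f (X \<union> T) + f (Y \<union> T)"
    using assms by (intro union_inter_le) auto
  moreover have "(X \<union> T) \<inter> (Y \<union> T) = T" using assms(6) by auto
  moreover have "0 \<le> f ((X \<union> T) \<union> (Y \<union> T))" using assms by (intro nonneg) auto
  ultimately show ?thesis by simp
qed

end

lemma la_stepE:
  assumes "la_step f c B e (X0, Y0) (X1, Y1)"
  obtains (addX) "X1 = insert e X0" "Y1 = Y0" "la_ok f c B e X0"
      "la_ok f c B e Y0 \<longrightarrow> marg f e Y0 / c e \<le> marg f e X0 / c e"
    | (addY) "X1 = X0" "Y1 = insert e Y0" "la_ok f c B e Y0"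
      "la_ok f c B e X0 \<longrightarrow> marg f e X0 / c e \<le> marg f e Y0 / c e"
    | (skip) "X1 = X0" "Y1 = Y0" "\<not> la_ok f c B e X0" "\<not> la_ok f c B e Y0"
  using assms by cases auto

lemma la_run_subset:
  assumes "la_run f c B es (X0, Y0) (X, Y)"
  shows "X0 \<subseteq> X \<and> X \<subseteq> X0 \<union> set es \<and> Y0 \<subseteq> Y \<and> Y \<subseteq> Y0 \<union> set es"
  using assms
proof (induction es X0 Y0 X Y rule: la_run.induct[split_format (complete)])
  case (Cons e X0 Y0 X1 Y1 es X Y)
  from Cons.hyps(1) show ?case by (cases rule: la_stepE) (use Cons.IH in auto)
qed simp

lemma la_run_disjoint:
  assumes "la_run f c B es (X0, Y0) (X, Y)" "distinct es"
    "set es \<inter> (X0 \<union> Y0) = {}" "X0 \<inter> Y0 = {}"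
  shows "X \<inter> Y = {}"
  using assms
proof (induction es X0 Y0 X Y rule: la_run.induct[split_format (complete)])
  case (Cons e X0 Y0 X1 Y1 es X Y)
  from Cons.hyps(1) show ?case by (cases rule: la_stepE) (use Cons in auto)
qed simp

locale la_instance = nonneg_submodular_fn +
  fixes c :: "'a \<Rightarrow> real" and B :: real
  assumes cost_pos: "\<And>e. e \<in> V \<Longrightarrow> 0 < c e"
    and budget_pos: "0 < B"
begin

lemma la_ok_iff:
  assumes "e \<in> V"
  shows "la_ok f c B e Z \<longleftrightarrow> c e * f Z / B \<le> marg f e Z"
  using cost_pos[OF assms] budget_pos unfolding la_ok_def by (simp add: field_simps)

lemma density_threshold_nonneg:
  assumes "Z \<subseteq> V" "e \<in> V"
  shows "0 \<le> c e * f Z / B"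
  using nonneg[OF assms(1)] cost_pos[OF assms(2)] budget_pos by simp

lemma marg_nonneg_of_la_ok:
  assumes "la_ok f c B e Z" "Z \<subseteq> V" "e \<in> V"
  shows "0 \<le> marg f e Z"
proof -
  have "c e * f Z / B \<le> marg f e Z" using assms(1) la_ok_iff[OF assms(3)] by simp
  with density_threshold_nonneg[OF assms(2,3)] show ?thesis by linarith
qed

lemma la_step_mono:
  assumes "la_step f c B e (X0, Y0) (X1, Y1)" "X0 \<subseteq> V" "Y0 \<subseteq> V" "e \<in> V"
  shows "f X0 \<le> f X1 \<and> f Y0 \<le> f Y1"
  using assms(1)
proof (cases rule: la_stepE)
  case addX
  then show ?thesis using marg_nonneg_of_la_ok[of e X0] assms(2,4) by (simp add: marg_eq)
next
  case addY
  then show ?thesis using marg_nonneg_of_la_ok[of e Y0] assms(3,4) by (simp add: marg_eq)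
next
  case skip
  then show ?thesis by simp
qed

lemma la_run_mono:
  assumes "la_run f c B es (X0, Y0) (X, Y)" "set es \<subseteq> V" "X0 \<subseteq> V" "Y0 \<subseteq> V"
  shows "f X0 \<le> f X \<and> f Y0 \<le> f Y"
  using assms
proof (induction es X0 Y0 X Y rule: la_run.induct[split_format (complete)])
  case (Cons e X0 Y0 X1 Y1 es X Y)
  have "X1 \<subseteq> V \<and> Y1 \<subseteq> V"
    using Cons.hyps(1) by (cases rule: la_stepE) (use Cons.prems in auto)
  with Cons la_step_mono[OF Cons.hyps(1)] show ?case by fastforce
qed simp

lemma marg_le_of_not_la_ok:
  assumes "\<not> la_ok f c B e Z0" "Z0 \<subseteq> Z" "Z \<subseteq> V" "e \<in> V"
  shows "marg f e Z \<le> c e * f Z0 / B"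
proof -
  have "marg f e Z0 < c e * f Z0 / B" using assms(1) la_ok_iff[OF assms(4)] by simp
  moreover have "0 \<le> c e * f Z0 / B" using assms(2-4) by (intro density_threshold_nonneg) auto
  ultimately show ?thesis using marg_le_max_zero[OF assms(2-4)] by linarith
qed

lemma marg_le_of_preferred:
  assumes "la_ok f c B e X0" "la_ok f c B e Y0 \<longrightarrow> marg f e Y0 / c e \<le> marg f e X0 / c e"
    "X0 \<subseteq> V" "Y0 \<subseteq> Y" "Y \<subseteq> V" "e \<in> V"
  shows "marg f e Y \<le> c e * f Y0 / B + (f (insert e X0) - f X0)"
proof (cases "la_ok f c B e Y0")
  case True
  have "marg f e Y0 \<le> marg f e X0"
    using True assms(2) cost_pos[OF assms(6)] by (simp add: divide_le_cancel)
  moreover have "0 \<le> marg f e X0" using marg_nonneg_of_la_ok assms by blast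
  moreover have "0 \<le> c e * f Y0 / B" using density_threshold_nonneg assms by blast
  ultimately show ?thesis
    using marg_le_max_zero[OF assms(4-6)] by (simp add: marg_eq)
next
  case False
  have "0 \<le> marg f e X0" using marg_nonneg_of_la_ok assms by blast
  with marg_le_of_not_la_ok[OF False assms(4-6)] show ?thesis by (simp add: marg_eq)
qed

lemma la_step_marg_le:
  assumes step: "la_step f c B e (X0, Y0) (X1, Y1)"
    and "X1 \<subseteq> X" "Y1 \<subseteq> Y" "X \<subseteq> V" "Y \<subseteq> V" "e \<in> V"
    and grown: "f X0 \<le> f X" "f Y0 \<le> f Y"
  shows "marg f e X + marg f e Y \<le> c e * (f X + f Y) / B + (f X1 - f X0) + (f Y1 - f Y0)"
proof -
  have sub: "X0 \<subseteq> X" "Y0 \<subseteq> Y"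
    using step assms(2,3) by (cases rule: la_stepE; auto)+
  have split: "c e * (f X + f Y) / B = c e * f X / B + c e * f Y / B"
    by (simp add: distrib_left add_divide_distrib)
  have scaled: "c e * f X0 / B \<le> c e * f X / B" "c e * f Y0 / B \<le> c e * f Y / B"
    using grown cost_pos[OF assms(6)] budget_pos by (auto intro!: divide_right_mono mult_left_mono)
  have "0 \<le> c e * f X / B" "0 \<le> c e * f Y / B"
    using assms(4-6) by (auto intro!: density_threshold_nonneg)
  note bounds = split scaled this
  from step show ?thesis
  proof (cases rule: la_stepE)
    case addX
    have "marg f e Y \<le> c e * f Y0 / B + (f X1 - f X0)"
      using addX sub assms(4-6) marg_le_of_preferred[of e X0 Y0 Y] by auto
    moreover have "marg f e X = 0" using addX assms(2) by (intro marg_of_mem) auto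
    ultimately show ?thesis using addX bounds by simp
  next
    case addY
    have "marg f e X \<le> c e * f X0 / B + (f Y1 - f Y0)"
      using addY sub assms(4-6) marg_le_of_preferred[of e Y0 X0 X] by auto
    moreover have "marg f e Y = 0" using addY assms(3) by (intro marg_of_mem) auto
    ultimately show ?thesis using addY bounds by simp
  next
    case skip
    have "marg f e X \<le> c e * f X0 / B" "marg f e Y \<le> c e * f Y0 / B"
      using skip sub assms(4-6) by (auto intro!: marg_le_of_not_la_ok)
    then show ?thesis using skip bounds by simp
  qed
qed

lemma la_run_sum_marg_le:
  assumes "la_run f c B es (X0, Y0) (X, Y)" "distinct es" "set es \<subseteq> V" "X0 \<subseteq> V" "Y0 \<subseteq> V"
  shows "(\<Sum>e\<in>Q \<inter> set es. marg f e X + marg f e Y)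
    \<le> cost c (Q \<inter> set es) * (f X + f Y) / B + (f X - f X0) + (f Y - f Y0)"
  using assms
proof (induction es X0 Y0 X Y rule: la_run.induct[split_format (complete)])
  case (Cons e X0 Y0 X1 Y1 es X Y)
  have V1: "X1 \<subseteq> V" "Y1 \<subseteq> V"
    using Cons.hyps(1) by (cases rule: la_stepE; use Cons.prems in auto)+
  have sub: "X1 \<subseteq> X" "Y1 \<subseteq> Y" "X \<subseteq> V" "Y \<subseteq> V"
    using la_run_subset[OF Cons.hyps(2)] V1 Cons.prems by auto
  have grown1: "f X1 \<le> f X" "f Y1 \<le> f Y"
    using la_run_mono[OF Cons.hyps(2)] V1 Cons.prems by auto
  have grown0: "f X0 \<le> f X1" "f Y0 \<le> f Y1"
    using la_step_mono[OF Cons.hyps(1)] Cons.prems by auto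
  have IH: "(\<Sum>e\<in>Q \<inter> set es. marg f e X + marg f e Y)
      \<le> cost c (Q \<inter> set es) * (f X + f Y) / B + (f X - f X1) + (f Y - f Y1)"
    using Cons.IH V1 Cons.prems by auto
  have e_new: "e \<notin> set es" using Cons.prems by simp
  show ?case
  proof (cases "e \<in> Q")
    case True
    have "marg f e X + marg f e Y \<le> c e * (f X + f Y) / B + (f X1 - f X0) + (f Y1 - f Y0)"
      using Cons.hyps(1) sub Cons.prems grown0 grown1 by (intro la_step_marg_le) auto
    moreover have "Q \<inter> set (e # es) = insert e (Q \<inter> set es)" "e \<notin> Q \<inter> set es"
      using True e_new by auto
    ultimately show ?thesis
      using IH by (simp add: cost_def distrib_right add_divide_distrib)
  next
    case False
    then have "Q \<inter> set (e # es) = Q \<inter> set es" by auto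
    with IH grown0 show ?thesis by simp
  qed
qed (simp add: cost_def)

end

theorem lemma2:
  fixes V :: "'a set" and f :: "'a set \<Rightarrow> real" and c :: "'a \<Rightarrow> real" and B :: real
    and order :: "'a list" and X Y O1 :: "'a set"
  assumes finV: "finite V"
    and nonneg: "\<And>S. S \<subseteq> V \<Longrightarrow> f S \<ge> 0"
    and f_empty: "f {} = 0"
    and submod: "submodular_on V f"
    and cpos: "\<And>e. e \<in> V \<Longrightarrow> c e > 0"
    and Bpos: "B > 0"
    and cle: "\<And>e. e \<in> V \<Longrightarrow> c e \<le> B"
    and order: "distinct order" "set order = {e \<in> V. c e \<le> B / 2}"
    and run: "la_run f c B order ({}, {}) (X, Y)"
    and O1_feas: "O1 \<subseteq> {e \<in> V. c e \<le> B / 2}" "cost c O1 \<le> B"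
    and O1_opt: "\<And>S. S \<subseteq> {e \<in> V. c e \<le> B / 2} \<Longrightarrow> cost c S \<le> B \<Longrightarrow> f S \<le> f O1"
  shows "f O1 \<le> 3 * (f X + f Y)"
proof -
  interpret la_instance V f c B
    using submod nonneg cpos Bpos by unfold_locales auto
  have XY: "X \<subseteq> V" "Y \<subseteq> V" "X \<inter> Y = {}"
    using la_run_subset[OF run] la_run_disjoint[OF run order(1)] order(2) by auto
  have O1: "O1 \<subseteq> V" "finite O1" "O1 \<inter> set order = O1"
    using O1_feas(1) order(2) finite_subset[OF _ finV] by auto
  have "0 \<le> f X + f Y" using nonneg XY by (simp add: add_nonneg_nonneg)
  then have "cost c O1 * (f X + f Y) / B \<le> f X + f Y"
    using O1_feas(2) Bpos by (simp add: divide_le_eq mult_right_mono mult.commute)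
  then have gains: "(\<Sum>e\<in>O1. marg f e X + marg f e Y) \<le> 2 * (f X + f Y)"
    using la_run_sum_marg_le[OF run order(1), of O1] order(2) O1(3) f_empty by auto
  have "f O1 \<le> f (X \<union> O1) + f (Y \<union> O1)"
    using O1 XY finite_subset[OF XY(2) finV] by (intro le_add_union_of_disjoint) auto
  also have "\<dots> \<le> f X + f Y + (\<Sum>e\<in>O1. marg f e X + marg f e Y)"
    using union_le_add_sum_marg[of O1 X] union_le_add_sum_marg[of O1 Y] O1 XY
    by (simp add: sum.distrib)
  also have "\<dots> \<le> f X + f Y + 2 * (f X + f Y)"
    using gains by simp
  finally show ?thesis by simp
qed

end
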